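(* Let $d\ge0$ and $n>d$ be integers, let $T=\{T_1,\dots,T_l\}\in L(n,d)$ with $T\neq\{\emptyset\}$, and let $m$ be a positive integer. Let $$M(m,T)=\Bigl\{(m_1,\dots,m_l)\in\mathbb{Z}_{>0}^l:\ m_i\ge\operatorname{codim}_d(T_i)\ \forall i;\ m_i=1\text{ whenever }\operatorname{codim}_d(T_i)=1;\ m=m_1+\cdots+m_l\Bigr\}.$$ Then $$\kappa_{n,d}(m,T)=\sum_{(m_1,\dots,m_l)\in M(m,T)}\ \prod_{i=1}^l\kappa_{n-|T_i|,\,d-|T_i|}(m_i,\{\emptyset\}).$$
   Context: For a finite set $X$ let $\operatorname{codim}_d(X)=d+1-|X|$. For a finite collection $\{T_1,\dots,T_l\}$ of pairwise distinct finite sets put $\rho_d(\{T_1,\dots,T_l\})=\sum_{i=1}^l\operatorname{codim}_d(T_i)$ (with $\rho_d(\emptyset)=0$) and $D_d(\{T_1,\dots,T_l\})=\operatorname{codim}_d(T_1\cap\cdots\cap T_l)-\rho_d(\{T_1,\dots,T_l\})$. For integers $d\ge0$, $n>d$, $L(n,d)$ is the set of all collections $T$ of subsets of $\{1,\dots,n\}$ such that (i) $D_d(T')>0$ for every $T'\subset T$ with $|T'|>1$, and (ii) $0\le|T_i|\le d$ for every $T_i\in T$. It is partially ordered by: $T<T'$ iff $\rho_d(T)<\rho_d(T')$ and for every $T_i\in T$ there exists $T'_j\in T'$ with $T'_j\subset T_i$; $T\le T'$ means $T<T'$ or $T=T'$. With this order $L(n,d)$ is a lattice ($\emptyset$ minimum,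 $\{\emptyset\}$ maximum); $\vee$ denotes its join. For $X\subset\{1,\dots,n\}$ with $|X|=d$, $\{X\}\in L(n,d)$ is called a hyperplane. For $T\in L(n,d)$ and a positive integer $m$, $\kappa_{n,d}(m,T)$ is the number of $m$-element sets $\{X_1,\dots,X_m\}$ of distinct $d$-element subsets of $\{1,\dots,n\}$ such that $\{X_1\}\vee\cdots\vee\{X_m\}=T$; by convention $\kappa_{n,0}(m,\{\emptyset\})=1$ for all $n,m$. *)

theory Defs
  imports Main
begin

definition codim :: "nat \<Rightarrow> nat set \<Rightarrow> int" where
  "codim d X = int d + 1 - int (card X)"

definition rho :: "nat \<Rightarrow> nat set set \<Rightarrow> int" where
  "rho d T = (\<Sum>X\<in>T. codim d X)"

(* only used for nonempty collections *)
definition Dd :: "nat \<Rightarrow> nat set set \<Rightarrow> int" where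
  "Dd d T = codim d (\<Inter>T) - rho d T"

definition Lnd :: "nat \<Rightarrow> nat \<Rightarrow> nat set set set" where
  "Lnd n d = {T. (\<forall>X\<in>T. X \<subseteq> {1..n}) \<and>
                 (\<forall>T'\<subseteq>T. card T' > 1 \<longrightarrow> Dd d T' > 0) \<and>
                 (\<forall>X\<in>T. card X \<le> d)}"

definition Lless :: "nat \<Rightarrow> nat set set \<Rightarrow> nat set set \<Rightarrow> bool" where
  "Lless d T T' \<longleftrightarrow> rho d T < rho d T' \<and> (\<forall>X\<in>T. \<exists>Y\<in>T'. Y \<subseteq> X)"

definition Lle :: "nat \<Rightarrow> nat set set \<Rightarrow> nat set set \<Rightarrow> bool" where
  "Lle d T T' \<longleftrightarrow> Lless d T T' \<or> T = T'"

definition Ljoin :: "nat \<Rightarrow> nat \<Rightarrow> nat set set set \<Rightarrow> nat set set" where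
  "Ljoin n d S = (THE J. J \<in> Lnd n d \<and> (\<forall>T\<in>S. Lle d T J) \<and>
       (\<forall>K\<in>Lnd n d. (\<forall>T\<in>S. Lle d T K) \<longrightarrow> Lle d J K))"

definition kappa :: "nat \<Rightarrow> nat \<Rightarrow> nat \<Rightarrow> nat set set \<Rightarrow> nat" where
  "kappa n d m T = (if d = 0 \<and> T = {{}} then 1 else
     card {HS. HS \<subseteq> {X. X \<subseteq> {1..n} \<and> card X = d} \<and> card HS = m \<and>
                Ljoin n d ((\<lambda>X. {X}) ` HS) = T})"

text \<open>Tuples (m_i) indexed by the members of T, as functions vanishing outside T.\<close>
definition Mset :: "nat \<Rightarrow> nat \<Rightarrow> nat set set \<Rightarrow> (nat set \<Rightarrow> nat) set" where
  "Mset d m T = {f. (\<forall>X. X \<notin> T \<longrightarrow> f X = 0) \<and>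
      (\<forall>X\<in>T. f X > 0 \<and> int (f X) \<ge> codim d X \<and> (codim d X = 1 \<longrightarrow> f X = 1)) \<and>
      (\<Sum>X\<in>T. f X) = m}"

end

theory Submission
  imports Defs "HOL-Library.FuncSet"
begin

text \<open>On L(n,d) the order is refinement (every member of T contains a member of T'),
  because rho is strictly monotone along refinement. Joins of hyperplanes are built one
  hyperplane X at a time: adjoining X to K merges the greatest minimiser S of the submodular
  function S \<mapsto> codim (X \<inter> \<Inter>S) - rho S - codim X into the single set X \<inter> \<Inter>S, and rho grows by
  at most codim X. Consequently, if a family H of hyperplanes has join T, every hyperplane of H
  contains exactly one member t of T, the hyperplanes of H through t have join {t}, and
  conversely such families may be chosen independently for the members of T. Relabelling
  {1..n} - t as {1..n - |t|} identifies the families with join {t} with the families with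
  join {\<emptyset>} in dimension d - |t|; such a family has at least codim t members, and exactly one
  if codim t = 1. Sorting H by the sizes of its parts through the members of T gives the
  formula.\<close>

section \<open>Refinement order\<close>

definition refines :: "nat set set \<Rightarrow> nat set set \<Rightarrow> bool" where
  "refines A B \<longleftrightarrow> (\<forall>a\<in>A. \<exists>b\<in>B. b \<subseteq> a)"

lemma refines_refl: "refines A A"
  unfolding refines_def by auto

lemma refines_trans: "refines A B \<Longrightarrow> refines B C \<Longrightarrow> refines A C"
  unfolding refines_def by (meson order_trans)

lemma Lnd_iff:
  "T \<in> Lnd n d \<longleftrightarrow> (\<forall>X\<in>T. X \<subseteq> {1..n} \<and> card X \<le> d) \<and> (\<forall>T'\<subseteq>T. card T' > 1 \<longrightarrow> Dd d T' > 0)"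
  unfolding Lnd_def by auto

lemma Lnd_subset: "T \<in> Lnd n d \<Longrightarrow> X \<in> T \<Longrightarrow> X \<subseteq> {1..n}"
  unfolding Lnd_def by auto

lemma Lnd_card_le: "T \<in> Lnd n d \<Longrightarrow> X \<in> T \<Longrightarrow> card X \<le> d"
  unfolding Lnd_def by auto

lemma Lnd_Dd_pos: "T \<in> Lnd n d \<Longrightarrow> T' \<subseteq> T \<Longrightarrow> card T' > 1 \<Longrightarrow> Dd d T' > 0"
  unfolding Lnd_def by auto

lemma Lnd_member_finite: "T \<in> Lnd n d \<Longrightarrow> X \<in> T \<Longrightarrow> finite X"
  by (meson Lnd_subset finite_atLeastAtMost finite_subset)

lemma Lnd_finite: "T \<in> Lnd n d \<Longrightarrow> finite T"
  by (rule finite_subset[of _ "Pow {1..n}"]) (use Lnd_subset in blast, simp)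

lemma empty_in_Lnd: "{} \<in> Lnd n d"
  unfolding Lnd_def by auto

lemma singleton_in_Lnd: "X \<subseteq> {1..n} \<Longrightarrow> card X \<le> d \<Longrightarrow> {X} \<in> Lnd n d"
  unfolding Lnd_def by (auto simp: subset_singleton_iff)

lemma codim_ge_1: "card X \<le> d \<Longrightarrow> codim d X \<ge> 1"
  unfolding codim_def by simp

lemma codim_antimono: "finite B \<Longrightarrow> A \<subseteq> B \<Longrightarrow> codim d B \<le> codim d A"
  unfolding codim_def using card_mono by (simp add: of_nat_mono)

lemma singleton_if_not_card_gt_1: "finite C \<Longrightarrow> C \<noteq> {} \<Longrightarrow> \<not> card C > 1 \<Longrightarrow> \<exists>c. C = {c}"
  by (metis One_nat_def card_0_eq card_1_singletonE less_Suc0 nat_neq_iff)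

lemma rho_le_codim_Inter:
  assumes T: "T \<in> Lnd n d" and C: "C \<subseteq> T" "C \<noteq> {}"
  shows "rho d C \<le> codim d (\<Inter>C)"
proof (cases "card C > 1")
  case True
  thus ?thesis using Lnd_Dd_pos[OF T C(1)] unfolding Dd_def by simp
next
  case False
  have "finite C" using Lnd_finite[OF T] C(1) by (rule finite_subset[rotated])
  then obtain c where "C = {c}" using singleton_if_not_card_gt_1 False C by blast
  thus ?thesis unfolding rho_def by simp
qed

lemma rho_less_codim_Inter:
  "T \<in> Lnd n d \<Longrightarrow> C \<subseteq> T \<Longrightarrow> card C > 1 \<Longrightarrow> rho d C < codim d (\<Inter>C)"
  using Lnd_Dd_pos[of T n d C] unfolding Dd_def by simp

lemma rho_le_codim_of_subset_Inter:
  assumes T: "T \<in> Lnd n d" and C: "C \<subseteq> T" "C \<noteq> {}" and b: "b \<subseteq> \<Inter>C"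
  shows "rho d C \<le> codim d b" and "rho d C = codim d b \<Longrightarrow> C = {b}"
proof -
  obtain c where c: "c \<in> C" using C(2) by blast
  have fin: "finite (\<Inter>C)"
    using Lnd_member_finite[OF T] C(1) c by (meson Inter_lower finite_subset subsetD)
  have "codim d (\<Inter>C) \<le> codim d b" using codim_antimono[OF fin b] .
  thus le: "rho d C \<le> codim d b" using rho_le_codim_Inter[OF T C] by simp
  assume eq: "rho d C = codim d b"
  have "\<not> card C > 1"
    using rho_less_codim_Inter[OF T C(1)] \<open>codim d (\<Inter>C) \<le> codim d b\<close> eq by linarith
  moreover have "finite C" using Lnd_finite[OF T] C(1) by (rule finite_subset[rotated])
  ultimately obtain a where a: "C = {a}" using singleton_if_not_card_gt_1 C(2) by blast
  have "card a = card b" using eq unfolding a rho_def codim_def by simp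
  moreover have "b \<subseteq> a" "finite a" using b a Lnd_member_finite[OF T] C(1) by auto
  ultimately show "C = {b}" using a by (metis card_subset_eq)
qed

lemma rho_psubset_less:
  assumes B: "B \<in> Lnd n d" and C: "C \<subset> B"
  shows "rho d C < rho d B"
proof -
  have finB: "finite B" using Lnd_finite[OF B] .
  have "rho d B = rho d C + rho d (B - C)"
    unfolding rho_def using sum.subset_diff[of C B "codim d"] finB C by (simp add: add.commute)
  moreover have "rho d (B - C) > 0"
    unfolding rho_def using finB C codim_ge_1[OF Lnd_card_le[OF B]]
    by (intro sum_pos) (auto simp: less_le_trans[OF zero_less_one])
  ultimately show ?thesis by simp
qed

text \<open>Send each member of A to a member of B below it; the members of A over a fixed
  b \<in> B contribute at most codim b to rho A, with equality only for the fibre {b}.\<close>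
lemma rho_strict_mono:
  assumes A: "A \<in> Lnd n d" and B: "B \<in> Lnd n d" and r: "refines A B" and ne: "A \<noteq> B"
  shows "rho d A < rho d B"
proof -
  obtain \<phi> where \<phi>: "\<And>a. a \<in> A \<Longrightarrow> \<phi> a \<in> B \<and> \<phi> a \<subseteq> a"
    using bchoice[of A "\<lambda>a b. b \<in> B \<and> b \<subseteq> a"] r unfolding refines_def by blast
  define G where "G b = {a\<in>A. \<phi> a = b}" for b
  have G: "G b \<subseteq> A" "G b \<noteq> {}" "b \<subseteq> \<Inter>(G b)" if "b \<in> \<phi> ` A" for b
    using that \<phi> unfolding G_def by auto
  have rhoA: "rho d A = (\<Sum>b\<in>\<phi> ` A. rho d (G b))"
    unfolding G_def rho_def by (rule sum.group[symmetric]) (simp_all add: Lnd_finite[OF A])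
  have fibre_le: "rho d (G b) \<le> codim d b" if "b \<in> \<phi> ` A" for b
    using rho_le_codim_of_subset_Inter(1)[OF A G[OF that]] .
  have rho_image: "rho d (\<phi> ` A) = (\<Sum>b\<in>\<phi> ` A. codim d b)"
    unfolding rho_def ..
  have le: "rho d A \<le> rho d (\<phi> ` A)"
    unfolding rhoA rho_image by (rule sum_mono) (rule fibre_le)
  have "\<phi> ` A \<subseteq> B" using \<phi> by auto
  then consider "\<phi> ` A \<subset> B" | "\<phi> ` A = B" by blast
  thus ?thesis
  proof cases
    case 1
    thus ?thesis using le rho_psubset_less[OF B] by (blast intro: le_less_trans)
  next
    case 2
    have "\<exists>b\<in>\<phi> ` A. rho d (G b) < codim d b"
    proof (rule ccontr)
      assume "\<not> ?thesis"
      hence "G b = {b}" if "b \<in> \<phi> ` A" for b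
        using that fibre_le rho_le_codim_of_subset_Inter(2)[OF A G[OF that]] by force
      hence "\<phi> a = a" if "a \<in> A" for a
        using that unfolding G_def by blast
      hence "\<phi> ` A = A" by simp
      thus False using 2 ne by simp
    qed
    hence "rho d A < rho d (\<phi> ` A)"
      unfolding rhoA rho_image using fibre_le Lnd_finite[OF A]
      by (intro sum_strict_mono_ex1) (auto simp: less_le)
    thus ?thesis using 2 by simp
  qed
qed

lemma Lle_iff_refines:
  assumes "A \<in> Lnd n d" "B \<in> Lnd n d"
  shows "Lle d A B \<longleftrightarrow> refines A B"
proof
  show "Lle d A B \<Longrightarrow> refines A B"
    using refines_refl unfolding Lle_def Lless_def refines_def by auto
  show "refines A B \<Longrightarrow> Lle d A B"
    using rho_strict_mono[OF assms] unfolding Lle_def Lless_def refines_def by blast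
qed

lemma refines_antisym:
  "A \<in> Lnd n d \<Longrightarrow> B \<in> Lnd n d \<Longrightarrow> refines A B \<Longrightarrow> refines B A \<Longrightarrow> A = B"
  using rho_strict_mono[of A n d B] rho_strict_mono[of B n d A] by (cases "A = B") auto

section \<open>Existence of joins\<close>

definition is_join :: "nat \<Rightarrow> nat \<Rightarrow> nat set set \<Rightarrow> nat set set \<Rightarrow> bool" where
  "is_join n d A J \<longleftrightarrow> J \<in> Lnd n d \<and> refines A J \<and> (\<forall>K\<in>Lnd n d. refines A K \<longrightarrow> refines J K)"

lemma refines_insert_iff: "refines (insert X A) B \<longleftrightarrow> (\<exists>b\<in>B. b \<subseteq> X) \<and> refines A B"
  unfolding refines_def by auto

lemma is_join_unique: "is_join n d A J \<Longrightarrow> is_join n d A J' \<Longrightarrow> J = J'"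
  unfolding is_join_def by (metis refines_antisym)

lemma is_join_insert:
  assumes A: "is_join n d A J" and J: "is_join n d (insert X J) J'"
  shows "is_join n d (insert X A) J'"
proof -
  have "refines (insert X A) K \<longleftrightarrow> refines (insert X J) K" if "K \<in> Lnd n d" for K
    using A that refines_trans[of A J K] unfolding is_join_def refines_insert_iff by blast
  thus ?thesis using J unfolding is_join_def by blast
qed

text \<open>The intersection grows by at most the total enlargement.\<close>
lemma codim_INT_supersets_gt:
  assumes K': "K' \<in> Lnd n d" and U: "U \<subseteq> K'" "card U > 1"
    and y: "\<And>w. w \<in> U \<Longrightarrow> w \<subseteq> y w \<and> finite (y w)"
  shows "(\<Sum>w\<in>U. codim d (y w)) < codim d (\<Inter>w\<in>U. y w)"
proof -
  have finU: "finite U" using U(2) by (metis card.infinite not_less_zero)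
  have finw: "finite w" if "w \<in> U" for w using Lnd_member_finite[OF K'] U(1) that by blast
  obtain w0 where w0: "w0 \<in> U" using U(2) by fastforce
  have finIU: "finite (\<Inter>U)" using finw[OF w0] w0 by (meson Inter_lower finite_subset)
  have fin_extra: "finite (\<Union>w\<in>U. y w - w)" using finU y by blast
  have "card (\<Inter>w\<in>U. y w) \<le> card (\<Inter>U \<union> (\<Union>w\<in>U. y w - w))"
    by (rule card_mono) (use finIU fin_extra in auto)
  also have "\<dots> \<le> card (\<Inter>U) + card (\<Union>w\<in>U. y w - w)" by (rule card_Un_le)
  also have "card (\<Union>w\<in>U. y w - w) \<le> (\<Sum>w\<in>U. card (y w - w))" by (rule card_UN_le[OF finU])
  finally have "int (card (\<Inter>w\<in>U. y w)) \<le> int (card (\<Inter>U)) + (\<Sum>w\<in>U. int (card (y w - w)))"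
    by (simp flip: of_nat_sum)
  also have "(\<Sum>w\<in>U. int (card (y w - w))) = (\<Sum>w\<in>U. int (card (y w)) - int (card w))"
    using y finw by (intro sum.cong) (auto simp: card_Diff_subset card_mono of_nat_diff)
  finally have "int (card (\<Inter>w\<in>U. y w)) \<le> int (card (\<Inter>U)) + (\<Sum>w\<in>U. int (card (y w)) - int (card w))" .
  moreover have "rho d U < codim d (\<Inter>U)" using rho_less_codim_Inter[OF K' U] .
  ultimately show ?thesis unfolding rho_def codim_def by (simp add: sum_subtractf)
qed

definition excess :: "nat \<Rightarrow> nat set \<Rightarrow> nat set set \<Rightarrow> int" where
  "excess d X S = codim d (X \<inter> \<Inter>S) - rho d S - codim d X"

lemma excess_submodular:
  assumes "finite X" "finite A" "finite B"
  shows "excess d X (A \<union> B) + excess d X (A \<inter> B) \<le> excess d X A + excess d X B"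
proof -
  define a b c where "a = X \<inter> \<Inter>A" and "b = X \<inter> \<Inter>B" and "c = X \<inter> \<Inter>(A \<inter> B)"
  have ab: "X \<inter> \<Inter>(A \<union> B) = a \<inter> b" unfolding a_def b_def by auto
  have fin: "finite a" "finite b" "finite c" unfolding a_def b_def c_def using assms(1) by auto
  have "card (a \<union> b) \<le> card c"
    by (rule card_mono[OF fin(3)]) (auto simp: a_def b_def c_def)
  moreover have "card (a \<union> b) + card (a \<inter> b) = card a + card b"
    using card_Un_Int[OF fin(1,2)] by simp
  ultimately have "codim d (a \<inter> b) + codim d c \<le> codim d a + codim d b"
    unfolding codim_def by linarith
  moreover have "rho d (A \<union> B) + rho d (A \<inter> B) = rho d A + rho d B"
    unfolding rho_def using assms(2,3) by (rule sum.union_inter)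
  ultimately show ?thesis unfolding excess_def ab a_def b_def c_def by linarith
qed

lemma submodular_greatest_minimizer:
  fixes E :: "'a set \<Rightarrow> 'b::linordered_ab_group_add"
  assumes K: "finite K"
    and submod: "\<And>A B. A \<subseteq> K \<Longrightarrow> B \<subseteq> K \<Longrightarrow> E (A \<union> B) + E (A \<inter> B) \<le> E A + E B"
  obtains S where "S \<subseteq> K" "\<And>S'. S' \<subseteq> K \<Longrightarrow> E S \<le> E S'"
    "\<And>S'. S' \<subseteq> K \<Longrightarrow> E S' = E S \<Longrightarrow> S' \<subseteq> S"
proof -
  define \<delta> where "\<delta> = Min (E ` Pow K)"
  define M where "M = {S. S \<subseteq> K \<and> E S = \<delta>}"
  have \<delta>_le: "\<delta> \<le> E S" if "S \<subseteq> K" for S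
    unfolding \<delta>_def using K that by simp
  have union_M: "A \<union> B \<in> M" if "A \<in> M" "B \<in> M" for A B
  proof -
    have AB: "A \<subseteq> K" "B \<subseteq> K" "E A = \<delta>" "E B = \<delta>" using that unfolding M_def by auto
    have "E (A \<union> B) + E (A \<inter> B) \<le> \<delta> + \<delta>" using submod[OF AB(1,2)] AB(3,4) by simp
    also have "\<dots> \<le> \<delta> + E (A \<inter> B)" using AB(1) by (intro add_left_mono \<delta>_le) blast
    finally have "E (A \<union> B) \<le> \<delta>" by simp
    thus ?thesis unfolding M_def using \<delta>_le[of "A \<union> B"] AB(1,2) by simp
  qed
  have "\<Union>F \<in> M" if "finite F" "F \<noteq> {}" "F \<subseteq> M" for F
    using that by (induction F rule: finite_ne_induct) (auto intro: union_M)
  moreover have "finite M" unfolding M_def using K by simp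
  moreover have "M \<noteq> {}"
  proof -
    have "\<delta> \<in> E ` Pow K" unfolding \<delta>_def using K by (intro Min_in) auto
    thus ?thesis unfolding M_def by auto
  qed
  ultimately have "\<Union>M \<in> M" by blast
  hence "\<Union>M \<subseteq> K" "E (\<Union>M) = \<delta>" unfolding M_def by auto
  moreover have "S' \<subseteq> \<Union>M" if "S' \<subseteq> K" "E S' = \<delta>" for S'
    using that unfolding M_def by blast
  ultimately show thesis using \<delta>_le by (intro that[of "\<Union>M"]) auto
qed

locale hyperplane_adjunction =
  fixes n d :: nat and K :: "nat set set" and X :: "nat set" and S :: "nat set set"
  assumes K: "K \<in> Lnd n d" and X_subset: "X \<subseteq> {1..n}" and card_X: "card X \<le> d"
    and S_subset: "S \<subseteq> K"
    and S_min: "\<And>S'. S' \<subseteq> K \<Longrightarrow> excess d X S \<le> excess d X S'"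
    and S_greatest: "\<And>S'. S' \<subseteq> K \<Longrightarrow> excess d X S' = excess d X S \<Longrightarrow> S' \<subseteq> S"
begin

definition core :: "nat set" where
  "core = X \<inter> \<Inter>S"

definition adjoin :: "nat set set" where
  "adjoin = insert core (K - S)"

lemma finite_K: "finite K"
  using Lnd_finite[OF K] .

lemma finite_S: "finite S"
  using finite_K S_subset by (rule finite_subset[rotated])

lemma finite_X: "finite X"
  using X_subset by (rule finite_subset) simp

lemma card_core_le: "card core \<le> d"
  using card_mono[OF finite_X, of core] card_X unfolding core_def by simp

lemma codim_core: "codim d core = excess d X S + rho d S + codim d X"
  unfolding excess_def core_def by simp

lemma excess_nonpos: "excess d X S \<le> 0"
  using S_min[of "{}"] unfolding excess_def rho_def by simp

lemma core_notin: "core \<notin> K - S"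
proof
  assume core: "core \<in> K - S"
  have "excess d X (insert core S) = excess d X S - codim d core"
    using codim_core core finite_S unfolding excess_def rho_def core_def by auto
  moreover have "excess d X S \<le> excess d X (insert core S)" using S_min S_subset core by simp
  ultimately show False using codim_ge_1[OF card_core_le] by simp
qed

text \<open>S \<union> R has strictly larger excess than S, which is exactly the defining inequality.\<close>
lemma Dd_insert_core_pos:
  assumes R: "R \<subseteq> K - S" "R \<noteq> {}"
  shows "Dd d (insert core R) > 0"
proof -
  have finR: "finite R" using R(1) finite_K finite_subset by blast
  have "excess d X (S \<union> R) \<noteq> excess d X S"
    using S_greatest[of "S \<union> R"] S_subset R by blast
  hence gt: "excess d X (S \<union> R) > excess d X S" using S_min[of "S \<union> R"] S_subset R(1) by force
  have "X \<inter> \<Inter>(S \<union> R) = core \<inter> \<Inter>R" unfolding core_def by auto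
  moreover have "rho d (S \<union> R) = rho d S + rho d R"
    unfolding rho_def by (rule sum.union_disjoint) (use finite_S finR R(1) in auto)
  ultimately have "excess d X (S \<union> R) = codim d (core \<inter> \<Inter>R) - rho d S - rho d R - codim d X"
    unfolding excess_def by simp
  moreover have "rho d (insert core R) = codim d core + rho d R"
    unfolding rho_def using finR R(1) core_notin by (subst sum.insert) auto
  hence "Dd d (insert core R) = codim d (core \<inter> \<Inter>R) - codim d core - rho d R"
    unfolding Dd_def by simp
  ultimately show ?thesis using gt codim_core by linarith
qed

lemma adjoin_Lnd: "adjoin \<in> Lnd n d"
  unfolding Lnd_def
proof (intro CollectI conjI ballI allI impI)
  fix Y assume "Y \<in> adjoin"
  thus "Y \<subseteq> {1..n}" "card Y \<le> d"
    unfolding adjoin_def core_def using X_subset card_core_le Lnd_subset[OF K] Lnd_card_le[OF K]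
    by (auto simp: core_def)
next
  fix T' assume T': "T' \<subseteq> adjoin" and card_T': "1 < card T'"
  show "0 < Dd d T'"
  proof (cases "core \<in> T'")
    case False
    hence "T' \<subseteq> K" using T' unfolding adjoin_def by auto
    thus ?thesis using Lnd_Dd_pos[OF K _ card_T'] by simp
  next
    case True
    have "T' - {core} \<subseteq> K - S" using T' unfolding adjoin_def by auto
    moreover have "T' - {core} \<noteq> {}"
    proof
      assume "T' - {core} = {}"
      hence "T' = {core}" using True by auto
      thus False using card_T' by simp
    qed
    ultimately have "Dd d (insert core (T' - {core})) > 0" by (rule Dd_insert_core_pos)
    thus ?thesis using True by (simp add: insert_absorb)
  qed
qed

lemma refines_adjoin: "refines (insert X K) adjoin"
  unfolding refines_def adjoin_def core_def by auto

lemma rho_adjoin_le: "rho d adjoin \<le> rho d K + codim d X"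
proof -
  have "rho d adjoin = codim d core + rho d (K - S)"
    unfolding adjoin_def rho_def using core_notin finite_K by simp
  also have "rho d (K - S) = rho d K - rho d S"
    unfolding rho_def using sum_diff[OF finite_K S_subset] by simp
  finally show ?thesis using codim_core excess_nonpos by simp
qed

definition group_Inter :: "(nat set \<Rightarrow> nat set) \<Rightarrow> nat set \<Rightarrow> nat set \<Rightarrow> nat set" where
  "group_Inter u u0 w = (if w = u0 then X else UNIV) \<inter> \<Inter>{k\<in>S. u k = w}"

text \<open>Group S according to an arbitrary labelling u; the groups cost at least as much as S
  by minimality of its excess, and the group labelled u0 also pays for X.\<close>
lemma codim_core_le_grouped:
  "codim d core \<le> (\<Sum>w\<in>insert u0 (u ` S). codim d (group_Inter u u0 w))"
proof -
  define U where "U = insert u0 (u ` S)"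
  define C where "C w = {k\<in>S. u k = w}" for w
  let ?y = "group_Inter u u0"
  have finU: "finite U" unfolding U_def using finite_S by simp
  have C_sub: "C w \<subseteq> K" for w unfolding C_def using S_subset by auto
  have rho_S: "(\<Sum>w\<in>U. rho d (C w)) = rho d S"
    unfolding C_def rho_def by (rule sum.group) (use finite_S finU U_def in auto)
  have gain: "codim d (?y w) - rho d (C w) \<ge> 0" if "w \<in> U - {u0}" for w
  proof -
    have "C w \<noteq> {}" using that unfolding U_def C_def by auto
    hence "rho d (C w) \<le> codim d (\<Inter>(C w))" using rho_le_codim_Inter[OF K C_sub] by blast
    thus ?thesis unfolding group_Inter_def C_def using that by simp
  qed
  have gain_u0: "codim d (?y u0) - rho d (C u0) \<ge> excess d X S + codim d X"
    using S_min[OF C_sub[of u0]] unfolding excess_def group_Inter_def C_def by simp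
  have "(\<Sum>w\<in>U. codim d (?y w) - rho d (C w))
      = (codim d (?y u0) - rho d (C u0)) + (\<Sum>w\<in>U - {u0}. codim d (?y w) - rho d (C w))"
    using finU by (rule sum.remove) (simp add: U_def)
  also have "\<dots> \<ge> excess d X S + codim d X"
    using gain_u0 sum_nonneg[of "U - {u0}" "\<lambda>w. codim d (?y w) - rho d (C w)"] gain by fastforce
  finally have "(\<Sum>w\<in>U. codim d (?y w)) \<ge> excess d X S + codim d X + rho d S"
    using rho_S by (simp add: sum_subtractf)
  thus ?thesis using codim_core unfolding U_def by simp
qed

lemma INT_group_Inter: "(\<Inter>w\<in>insert u0 (u ` S). group_Inter u u0 w) = core"
  unfolding core_def group_Inter_def by auto

lemma group_Inter_enlarges:
  assumes u: "\<And>k. k \<in> S \<Longrightarrow> u k \<subseteq> k" and u0: "u0 \<subseteq> X" and w: "w \<in> insert u0 (u ` S)"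
  shows "w \<subseteq> group_Inter u u0 w \<and> finite (group_Inter u u0 w)"
proof
  show "w \<subseteq> group_Inter u u0 w" unfolding group_Inter_def using u0 u by auto
  show "finite (group_Inter u u0 w)"
  proof (cases "w = u0")
    case True
    thus ?thesis using finite_X unfolding group_Inter_def by simp
  next
    case False
    then obtain k where "k \<in> S" "w = u k" using w by blast
    hence "group_Inter u u0 w \<subseteq> k" "finite k"
      using Lnd_member_finite[OF K] S_subset unfolding group_Inter_def by auto
    thus ?thesis by (rule finite_subset)
  qed
qed

text \<open>Otherwise the members of K' below u0 and below the members of S would violate the
  defining inequality of K' after being enlarged to the groups of S.\<close>
lemma core_contains_member:
  assumes K': "K' \<in> Lnd n d" "refines K K'" and u0: "u0 \<in> K'" "u0 \<subseteq> X"
  shows "\<exists>w\<in>K'. w \<subseteq> core"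
proof (rule ccontr)
  assume none: "\<not> (\<exists>w\<in>K'. w \<subseteq> core)"
  obtain u where u: "\<And>k. k \<in> K \<Longrightarrow> u k \<in> K' \<and> u k \<subseteq> k"
    using bchoice[of K "\<lambda>k w. w \<in> K' \<and> w \<subseteq> k"] K'(2) unfolding refines_def by blast
  define U where "U = insert u0 (u ` S)"
  have U_sub: "U \<subseteq> K'" unfolding U_def using u0 u S_subset by blast
  have finU: "finite U" unfolding U_def using finite_S by simp
  have "card U > 1"
  proof (rule ccontr)
    assume "\<not> card U > 1"
    then obtain c where "U = {c}" using singleton_if_not_card_gt_1[OF finU] unfolding U_def by blast
    hence "u ` S \<subseteq> {u0}" unfolding U_def by blast
    hence "\<forall>k\<in>S. u0 \<subseteq> k" using u S_subset by (metis image_subset_iff singletonD subsetD)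
    hence "u0 \<subseteq> core" using u0 unfolding core_def by blast
    thus False using none u0 by blast
  qed
  moreover have "w \<subseteq> group_Inter u u0 w \<and> finite (group_Inter u u0 w)" if "w \<in> U" for w
    using group_Inter_enlarges[of u u0 w] u S_subset u0(2) that unfolding U_def by blast
  ultimately have "(\<Sum>w\<in>U. codim d (group_Inter u u0 w)) < codim d core"
    using codim_INT_supersets_gt[OF K'(1) U_sub] INT_group_Inter unfolding U_def by metis
  thus False using codim_core_le_grouped[of u u0] unfolding U_def by simp
qed

lemma adjoin_is_join: "is_join n d (insert X K) adjoin"
  unfolding is_join_def
proof (intro conjI ballI impI)
  show "adjoin \<in> Lnd n d" by (rule adjoin_Lnd)
  show "refines (insert X K) adjoin" by (rule refines_adjoin)
  fix K' assume K': "K' \<in> Lnd n d" "refines (insert X K) K'"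
  hence "refines K K'" "\<exists>u0\<in>K'. u0 \<subseteq> X" unfolding refines_insert_iff by auto
  hence "\<exists>w\<in>K'. w \<subseteq> core" using core_contains_member K'(1) by blast
  thus "refines adjoin K'"
    using \<open>refines K K'\<close> unfolding refines_def adjoin_def by blast
qed

end

lemma is_join_exists:
  assumes "finite H" "\<And>X. X \<in> H \<Longrightarrow> X \<subseteq> {1..n} \<and> card X \<le> d"
  shows "\<exists>J. is_join n d H J \<and> rho d J \<le> rho d H"
  using assms
proof (induction H rule: finite_induct)
  case empty
  have "is_join n d {} {}" unfolding is_join_def refines_def using empty_in_Lnd by blast
  thus ?case by blast
next
  case (insert X F)
  then obtain J where J: "is_join n d F J" "rho d J \<le> rho d F" by auto
  have JL: "J \<in> Lnd n d" using J(1) unfolding is_join_def by simp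
  have X: "X \<subseteq> {1..n}" "card X \<le> d" using insert.prems by auto
  have "finite X" using X(1) by (rule finite_subset) simp
  then obtain S where S: "S \<subseteq> J" "\<And>S'. S' \<subseteq> J \<Longrightarrow> excess d X S \<le> excess d X S'"
      "\<And>S'. S' \<subseteq> J \<Longrightarrow> excess d X S' = excess d X S \<Longrightarrow> S' \<subseteq> S"
    using submodular_greatest_minimizer[OF Lnd_finite[OF JL], of "excess d X"]
      excess_submodular Lnd_finite[OF JL] finite_subset by metis
  interpret hyperplane_adjunction n d J X S
    using JL X S by unfold_locales auto
  have "is_join n d (insert X F) adjoin" using is_join_insert[OF J(1) adjoin_is_join] .
  moreover have "rho d (insert X F) = codim d X + rho d F"
    unfolding rho_def using insert.hyps by simp
  ultimately show ?case using rho_adjoin_le J(2) by fastforce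
qed

section \<open>Joins of hyperplanes\<close>

lemma Lle_singleton_iff:
  assumes "X \<subseteq> {1..n}" "card X \<le> d" "K \<in> Lnd n d"
  shows "Lle d {X} K \<longleftrightarrow> (\<exists>k\<in>K. k \<subseteq> X)"
  using Lle_iff_refines[OF singleton_in_Lnd[OF assms(1,2)] assms(3)] unfolding refines_def by simp

lemma Ljoin_eq_iff_is_join:
  assumes H: "finite H" "\<And>X. X \<in> H \<Longrightarrow> X \<subseteq> {1..n} \<and> card X \<le> d"
  shows "Ljoin n d ((\<lambda>X. {X}) ` H) = J \<longleftrightarrow> is_join n d H J"
proof -
  have upper_iff: "(\<forall>T\<in>(\<lambda>X. {X}) ` H. Lle d T K) \<longleftrightarrow> refines H K" if "K \<in> Lnd n d" for K
    using Lle_singleton_iff[OF _ _ that] H(2) unfolding refines_def by force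
  have lub_iff: "(J' \<in> Lnd n d \<and> (\<forall>T\<in>(\<lambda>X. {X}) ` H. Lle d T J') \<and>
      (\<forall>K\<in>Lnd n d. (\<forall>T\<in>(\<lambda>X. {X}) ` H. Lle d T K) \<longrightarrow> Lle d J' K)) \<longleftrightarrow> is_join n d H J'" for J'
  proof (cases "J' \<in> Lnd n d")
    case True
    thus ?thesis unfolding is_join_def using upper_iff Lle_iff_refines[OF True] by simp
  qed (simp add: is_join_def)
  obtain J0 where J0: "is_join n d H J0" using is_join_exists[OF H] by blast
  have "Ljoin n d ((\<lambda>X. {X}) ` H) = J0"
    unfolding Ljoin_def lub_iff using J0 is_join_unique by (intro the_equality)
  thus ?thesis using J0 is_join_unique by blast
qed

definition hyperplanes :: "nat \<Rightarrow> nat \<Rightarrow> nat set set" where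
  "hyperplanes n d = {X. X \<subseteq> {1..n} \<and> card X = d}"

definition join_families :: "nat \<Rightarrow> nat \<Rightarrow> nat set set \<Rightarrow> nat set set set" where
  "join_families n d T = {H. H \<subseteq> hyperplanes n d \<and> is_join n d H T}"

lemma finite_hyperplanes: "finite (hyperplanes n d)"
  unfolding hyperplanes_def by (rule finite_subset[of _ "Pow {1..n}"]) auto

lemma hyperplane_family_finite: "H \<subseteq> hyperplanes n d \<Longrightarrow> finite H"
  by (erule finite_subset) (rule finite_hyperplanes)

lemma hyperplanesD: "X \<in> hyperplanes n d \<Longrightarrow> X \<subseteq> {1..n} \<and> card X \<le> d"
  unfolding hyperplanes_def by simp

lemma kappa_eq_card_join_families:
  assumes "\<not> (d = 0 \<and> T = {{}})"
  shows "kappa n d m T = card {H \<in> join_families n d T. card H = m}"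
proof -
  have "Ljoin n d ((\<lambda>X. {X}) ` H) = T \<longleftrightarrow> is_join n d H T" if "H \<subseteq> hyperplanes n d" for H
    using Ljoin_eq_iff_is_join hyperplane_family_finite[OF that] hyperplanesD that by blast
  hence "{H. H \<subseteq> hyperplanes n d \<and> card H = m \<and> Ljoin n d ((\<lambda>X. {X}) ` H) = T}
      = {H \<in> join_families n d T. card H = m}"
    unfolding join_families_def by blast
  thus ?thesis using assms unfolding kappa_def hyperplanes_def by (simp only: if_False)
qed

section \<open>Decomposition of a join along its members\<close>

lemma Lnd_member_subset_eq:
  assumes T: "T \<in> Lnd n d" and t: "t \<in> T" "t' \<in> T" "t \<subseteq> t'"
  shows "t = t'"
proof (rule ccontr)
  assume ne: "t \<noteq> t'"
  hence "Dd d {t, t'} > 0" using Lnd_Dd_pos[OF T] t by simp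
  moreover have "t \<inter> t' = t" using t(3) by blast
  ultimately have "0 < - codim d t'" unfolding Dd_def rho_def using ne by simp
  thus False using codim_ge_1[OF Lnd_card_le[OF T t(2)]] by simp
qed

lemma Lnd_unique_member_below:
  assumes T: "T \<in> Lnd n d" and t: "t \<in> T" "t' \<in> T" "t \<subseteq> X" "t' \<subseteq> X"
    and X: "finite X" "card X \<le> d"
  shows "t = t'"
proof (rule ccontr)
  assume ne: "t \<noteq> t'"
  hence "Dd d {t, t'} > 0" using Lnd_Dd_pos[OF T] t by simp
  hence "int (card t) + int (card t') - int (card (t \<inter> t')) > int d + 1"
    unfolding Dd_def rho_def codim_def using ne by simp
  moreover have "finite t" "finite t'" using X(1) t(3,4) finite_subset by auto
  hence "card (t \<union> t') + card (t \<inter> t') = card t + card t'" by (rule card_Un_Int[symmetric])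
  moreover have "card (t \<union> t') \<le> card X" using card_mono[OF X(1)] t(3,4) by simp
  ultimately show False using X(2) by linarith
qed

lemma card_Int_add_le:
  assumes a: "finite a" and b: "finite b" and t: "t \<subseteq> a"
  shows "card (a \<inter> b) + card t \<le> card (t \<inter> b) + card a"
proof -
  have "card (a \<inter> b) = card (t \<inter> b) + card (a \<inter> b - t \<inter> b)"
    using t b by (metis Int_mono card_Diff_subset card_mono finite_Int le_add_diff_inverse order_refl)
  also have "card (a \<inter> b - t \<inter> b) \<le> card (a - t)"
    by (rule card_mono) (use a in auto)
  also have "card (a - t) = card a - card t"
    using t a by (simp add: card_Diff_subset finite_subset)
  finally show ?thesis using card_mono[OF a t] by linarith
qed

text \<open>The members of J meet the old members only through t, so D of A \<union> B is controlled by
  D of {t} \<union> B.\<close>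
lemma Dd_replace_member_pos:
  assumes T: "T \<in> Lnd n d" and t: "t \<in> T" and J: "J \<in> Lnd n d" and Jt: "\<forall>j\<in>J. t \<subseteq> j"
    and A: "A \<subseteq> J" "A \<noteq> {}" and B: "B \<subseteq> T - {t}" "B \<noteq> {}" and AB: "A \<inter> B = {}"
  shows "Dd d (A \<union> B) > 0"
proof -
  have finA: "finite A" using A(1) Lnd_finite[OF J] by (rule finite_subset)
  have finB: "finite B" using B(1) Lnd_finite[OF T] by (meson Diff_subset finite_subset)
  obtain a0 b0 where a0: "a0 \<in> A" and b0: "b0 \<in> B" using A(2) B(2) by blast
  have fin_a: "finite (\<Inter>A)" using Lnd_member_finite[OF J] a0 A(1) by (meson Inter_lower finite_subset subsetD)
  have fin_b: "finite (\<Inter>B)" using Lnd_member_finite[OF T] b0 B(1) by (meson Diff_subset Inter_lower finite_subset subsetD)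
  have ta: "t \<subseteq> \<Inter>A" using Jt A(1) by blast
  have tB: "t \<notin> B" using B(1) by blast
  have "card B > 0" using b0 finB card_gt_0_iff by blast
  hence "card (insert t B) > 1" using tB finB by simp
  moreover have "insert t B \<subseteq> T" using B(1) t by blast
  ultimately have "Dd d (insert t B) > 0" using Lnd_Dd_pos[OF T] by blast
  hence D_tB: "codim d (t \<inter> \<Inter>B) > codim d t + rho d B"
    unfolding Dd_def rho_def using tB finB by simp
  have D_A: "codim d (\<Inter>A) \<ge> rho d A" using rho_le_codim_Inter[OF J A] .
  have "card (\<Inter>A \<inter> \<Inter>B) + card t \<le> card (t \<inter> \<Inter>B) + card (\<Inter>A)"
    using card_Int_add_le[OF fin_a fin_b ta] .
  hence "int (card (\<Inter>A \<inter> \<Inter>B)) \<le> int (card (t \<inter> \<Inter>B)) + int (card (\<Inter>A)) - int (card t)"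
    by linarith
  moreover have "\<Inter>(A \<union> B) = \<Inter>A \<inter> \<Inter>B" by auto
  moreover have "rho d (A \<union> B) = rho d A + rho d B"
    unfolding rho_def by (rule sum.union_disjoint) (use finA finB AB in auto)
  ultimately show ?thesis using D_tB D_A unfolding Dd_def codim_def by simp
qed

lemma Lnd_replace_member:
  assumes T: "T \<in> Lnd n d" and t: "t \<in> T" and J: "J \<in> Lnd n d" and Jt: "\<forall>j\<in>J. t \<subseteq> j"
  shows "(T - {t}) \<union> J \<in> Lnd n d"
  unfolding Lnd_def
proof (intro CollectI conjI ballI allI impI)
  fix Y assume "Y \<in> (T - {t}) \<union> J"
  thus "Y \<subseteq> {1..n}" "card Y \<le> d"
    using Lnd_subset[OF T] Lnd_subset[OF J] Lnd_card_le[OF T] Lnd_card_le[OF J] by auto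
next
  fix S assume S: "S \<subseteq> (T - {t}) \<union> J" and card_S: "1 < card S"
  have S_eq: "S = (S \<inter> J) \<union> (S - J)" by blast
  show "0 < Dd d S"
  proof (cases "S \<inter> J = {} \<or> S - J = {}")
    case True
    hence "S \<subseteq> J \<or> S \<subseteq> T" using S by blast
    thus ?thesis using Lnd_Dd_pos[OF J _ card_S] Lnd_Dd_pos[OF T _ card_S] by blast
  next
    case False
    thus ?thesis using Dd_replace_member_pos[OF T t J Jt, of "S \<inter> J" "S - J"] S S_eq by auto
  qed
qed

lemma refines_replace_member:
  assumes "refines H T" "refines {X\<in>H. t \<subseteq> X} J"
  shows "refines H ((T - {t}) \<union> J)"
  unfolding refines_def
proof
  fix X assume X: "X \<in> H"
  then obtain t' where t': "t' \<in> T" "t' \<subseteq> X" using assms(1) unfolding refines_def by blast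
  show "\<exists>k\<in>(T - {t}) \<union> J. k \<subseteq> X"
  proof (cases "t' = t")
    case True
    then obtain j where "j \<in> J" "j \<subseteq> X" using assms(2) X t' unfolding refines_def by blast
    thus ?thesis by blast
  qed (use t' in auto)
qed

text \<open>Replacing t by the join J of the hyperplanes through t yields an upper bound of H
  below T, hence equal to T, which forces J = {t}.\<close>
lemma is_join_through_member:
  assumes H: "finite H" "\<And>X. X \<in> H \<Longrightarrow> X \<subseteq> {1..n} \<and> card X \<le> d"
    and join: "is_join n d H T" and t: "t \<in> T"
  shows "is_join n d {X\<in>H. t \<subseteq> X} {t}"
proof -
  have T: "T \<in> Lnd n d" using join unfolding is_join_def by simp
  have "finite {X\<in>H. t \<subseteq> X}" "\<And>X. X \<in> {X\<in>H. t \<subseteq> X} \<Longrightarrow> X \<subseteq> {1..n} \<and> card X \<le> d"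
    using H by auto
  from is_join_exists[OF this] obtain J where J: "is_join n d {X\<in>H. t \<subseteq> X} J" by blast
  have JL: "J \<in> Lnd n d" using J unfolding is_join_def by simp
  have "{t} \<in> Lnd n d" using singleton_in_Lnd Lnd_subset[OF T t] Lnd_card_le[OF T t] by blast
  moreover have "refines {X\<in>H. t \<subseteq> X} {t}" unfolding refines_def by blast
  ultimately have "refines J {t}" using J unfolding is_join_def by blast
  hence Jt: "\<forall>j\<in>J. t \<subseteq> j" unfolding refines_def by simp
  define T' where "T' = (T - {t}) \<union> J"
  have T'L: "T' \<in> Lnd n d" unfolding T'_def using Lnd_replace_member[OF T t JL Jt] .
  have "refines H T'"
    unfolding T'_def using join J refines_replace_member unfolding is_join_def by blast
  hence "refines T T'" using join T'L unfolding is_join_def by blast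
  moreover have "refines T' T" unfolding refines_def T'_def using Jt t by blast
  ultimately have T_eq: "T = T'" using refines_antisym[OF T T'L] by simp
  have "J = {t}"
  proof
    show "J \<subseteq> {t}"
    proof
      fix j assume j: "j \<in> J"
      hence "j \<in> T" using T_eq unfolding T'_def by blast
      thus "j \<in> {t}" using Lnd_member_subset_eq[OF T t] Jt j by blast
    qed
    show "{t} \<subseteq> J" using T_eq t unfolding T'_def by blast
  qed
  thus ?thesis using J by simp
qed

lemma is_join_of_through_members:
  assumes T: "T \<in> Lnd n d" and cover: "refines H T"
    and local: "\<And>t. t \<in> T \<Longrightarrow> is_join n d {X\<in>H. t \<subseteq> X} {t}"
  shows "is_join n d H T"
  unfolding is_join_def
proof (intro conjI ballI impI)
  fix K assume K: "K \<in> Lnd n d" "refines H K"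
  show "refines T K"
    unfolding refines_def
  proof
    fix t assume "t \<in> T"
    moreover have "refines {X\<in>H. t \<subseteq> X} K" using K(2) unfolding refines_def by blast
    ultimately have "refines {t} K" using local K(1) unfolding is_join_def by blast
    thus "\<exists>k\<in>K. k \<subseteq> t" unfolding refines_def by simp
  qed
qed (use T cover in auto)

lemma through_members_disjoint:
  assumes T: "T \<in> Lnd n d" and H: "H \<subseteq> hyperplanes n d" and t: "t \<in> T" "t' \<in> T" "t \<noteq> t'"
  shows "{X\<in>H. t \<subseteq> X} \<inter> {X\<in>H. t' \<subseteq> X} = {}"
proof -
  have "t = t'" if "X \<in> H" "t \<subseteq> X" "t' \<subseteq> X" for X
  proof -
    have "X \<subseteq> {1..n}" "card X = d" using that(1) H unfolding hyperplanes_def by auto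
    hence "finite X" "card X \<le> d" using finite_subset by auto
    thus ?thesis using Lnd_unique_member_below[OF T t(1,2) that(2,3)] by simp
  qed
  thus ?thesis using t(3) by blast
qed

lemma card_join_family:
  assumes T: "T \<in> Lnd n d" and H: "H \<in> join_families n d T"
  shows "card H = (\<Sum>t\<in>T. card {X\<in>H. t \<subseteq> X})"
proof -
  have Hh: "H \<subseteq> hyperplanes n d" "refines H T" using H unfolding join_families_def is_join_def by auto
  have "H = (\<Union>t\<in>T. {X\<in>H. t \<subseteq> X})" using Hh(2) unfolding refines_def by blast
  also have "card \<dots> = (\<Sum>t\<in>T. card {X\<in>H. t \<subseteq> X})"
    using Lnd_finite[OF T] hyperplane_family_finite[OF Hh(1)] through_members_disjoint[OF T Hh(1)]
    by (intro card_UN_disjoint) auto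
  finally show ?thesis .
qed

lemma through_member_of_Union:
  assumes T: "T \<in> Lnd n d" and G: "G \<in> (\<Pi>\<^sub>E t\<in>T. join_families n d {t})" and t: "t \<in> T"
  shows "{X \<in> (\<Union>t\<in>T. G t). t \<subseteq> X} = G t"
proof -
  have G_t: "G t' \<subseteq> hyperplanes n d \<and> (\<forall>X\<in>G t'. t' \<subseteq> X)" if "t' \<in> T" for t'
    using G that unfolding join_families_def is_join_def refines_def by auto
  have "X \<in> G t" if "t' \<in> T" "X \<in> G t'" "t \<subseteq> X" for t' X
  proof -
    have "X \<in> {X \<in> G t'. t \<subseteq> X} \<inter> {X \<in> G t'. t' \<subseteq> X}" using G_t that by blast
    hence "t = t'" using through_members_disjoint[OF T _ t that(1)] G_t[OF that(1)] by blast
    thus ?thesis using that(2) by simp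
  qed
  moreover have "X \<in> (\<Union>t\<in>T. G t) \<and> t \<subseteq> X" if "X \<in> G t" for X
    using G_t[OF t] t that by blast
  ultimately show ?thesis by blast
qed

lemma Union_in_join_families:
  assumes T: "T \<in> Lnd n d" and G: "G \<in> (\<Pi>\<^sub>E t\<in>T. join_families n d {t})"
  shows "(\<Union>t\<in>T. G t) \<in> join_families n d T"
proof -
  have G_t: "G t \<subseteq> hyperplanes n d" "is_join n d (G t) {t}" if "t \<in> T" for t
    using G that unfolding join_families_def by auto
  have "refines (\<Union>t\<in>T. G t) T"
    unfolding refines_def
  proof
    fix X assume "X \<in> (\<Union>t\<in>T. G t)"
    then obtain t where t: "t \<in> T" "X \<in> G t" by blast
    hence "refines (G t) {t}" using G_t(2) unfolding is_join_def by blast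
    thus "\<exists>t\<in>T. t \<subseteq> X" using t unfolding refines_def by blast
  qed
  moreover have "is_join n d {X \<in> (\<Union>t\<in>T. G t). t \<subseteq> X} {t}" if "t \<in> T" for t
    using through_member_of_Union[OF T G that] G_t(2)[OF that] by simp
  moreover have "(\<Union>t\<in>T. G t) \<subseteq> hyperplanes n d" using G_t by blast
  ultimately show ?thesis
    using is_join_of_through_members[OF T] unfolding join_families_def by blast
qed

lemma bij_betw_join_families:
  assumes T: "T \<in> Lnd n d"
  shows "bij_betw (\<lambda>H. \<lambda>t\<in>T. {X\<in>H. t \<subseteq> X}) (join_families n d T)
           (\<Pi>\<^sub>E t\<in>T. join_families n d {t})"
proof (rule bij_betw_byWitness[where f' = "\<lambda>G. \<Union>t\<in>T. G t"])
  show "\<forall>H\<in>join_families n d T. (\<Union>t\<in>T. (\<lambda>t\<in>T. {X\<in>H. t \<subseteq> X}) t) = H"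
    unfolding join_families_def is_join_def refines_def by auto
  show "\<forall>G\<in>\<Pi>\<^sub>E t\<in>T. join_families n d {t}. (\<lambda>t\<in>T. {X \<in> (\<Union>t\<in>T. G t). t \<subseteq> X}) = G"
  proof
    fix G assume G: "G \<in> (\<Pi>\<^sub>E t\<in>T. join_families n d {t})"
    show "(\<lambda>t\<in>T. {X \<in> (\<Union>t\<in>T. G t). t \<subseteq> X}) = G"
    proof
      fix t show "(\<lambda>t\<in>T. {X \<in> (\<Union>t\<in>T. G t). t \<subseteq> X}) t = G t"
        using through_member_of_Union[OF T G] PiE_arb[OF G] by (cases "t \<in> T") simp_all
    qed
  qed
  have "{X\<in>H. t \<subseteq> X} \<in> join_families n d {t}" if "H \<in> join_families n d T" "t \<in> T" for H t
    using that is_join_through_member[OF hyperplane_family_finite hyperplanesD]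
    unfolding join_families_def by blast
  thus "(\<lambda>H. \<lambda>t\<in>T. {X\<in>H. t \<subseteq> X}) ` join_families n d T \<subseteq> (\<Pi>\<^sub>E t\<in>T. join_families n d {t})"
    by auto
  show "(\<lambda>G. \<Union>t\<in>T. G t) ` (\<Pi>\<^sub>E t\<in>T. join_families n d {t}) \<subseteq> join_families n d T"
    using Union_in_join_families[OF T] by blast
qed

lemma card_join_families_eq_card_PiE:
  assumes T: "T \<in> Lnd n d"
  shows "card {H \<in> join_families n d T. card H = m}
       = card {G \<in> \<Pi>\<^sub>E t\<in>T. join_families n d {t}. (\<Sum>t\<in>T. card (G t)) = m}"
proof (rule bij_betw_same_card)
  show "bij_betw (\<lambda>H. \<lambda>t\<in>T. {X\<in>H. t \<subseteq> X}) {H \<in> join_families n d T. card H = m}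
      {G \<in> \<Pi>\<^sub>E t\<in>T. join_families n d {t}. (\<Sum>t\<in>T. card (G t)) = m}"
    using card_join_family[OF T] by (intro bij_betw_Collect[OF bij_betw_join_families[OF T]]) simp
qed

section \<open>Families with join a single set\<close>

text \<open>h relabels {1..n - |t|} as {1..n} - t, so that lift is a bijection from the subsets of
  {1..n - |t|} onto the subsets of {1..n} containing t.\<close>
locale link =
  fixes n d :: nat and t :: "nat set" and h :: "nat \<Rightarrow> nat"
  assumes t_subset: "t \<subseteq> {1..n}" and card_t: "card t \<le> d"
    and h: "bij_betw h {1..n - card t} ({1..n} - t)"
begin

abbreviation "n' \<equiv> n - card t"
abbreviation "d' \<equiv> d - card t"

definition lift :: "nat set \<Rightarrow> nat set" where
  "lift u = t \<union> h ` u"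

lemma finite_t: "finite t"
  using t_subset by (rule finite_subset) simp

lemma inj_h: "inj_on h {1..n'}" and image_h: "h ` {1..n'} = {1..n} - t"
  using h by (simp_all add: bij_betw_def)

lemma card_lift: "u \<subseteq> {1..n'} \<Longrightarrow> card (lift u) = card t + card u"
proof -
  assume u: "u \<subseteq> {1..n'}"
  have "finite u" using u by (rule finite_subset) simp
  moreover have "t \<inter> h ` u = {}" using u image_h by blast
  ultimately have "card (lift u) = card t + card (h ` u)"
    unfolding lift_def using finite_t by (simp add: card_Un_disjoint)
  thus ?thesis using card_image inj_on_subset[OF inj_h u] by metis
qed

lemma codim_lift: "u \<subseteq> {1..n'} \<Longrightarrow> codim d (lift u) = codim d' u"
  unfolding codim_def using card_lift card_t by simp

lemma lift_subset: "u \<subseteq> {1..n'} \<Longrightarrow> lift u \<subseteq> {1..n}"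
  unfolding lift_def using t_subset image_h by blast

lemma lift_subset_iff:
  assumes u: "u \<subseteq> {1..n'}" and v: "v \<subseteq> {1..n'}"
  shows "lift u \<subseteq> lift v \<longleftrightarrow> u \<subseteq> v"
proof -
  have "lift u \<subseteq> lift v \<longleftrightarrow> h ` u \<subseteq> h ` v"
    unfolding lift_def using u image_h by blast
  also have "\<dots> \<longleftrightarrow> u \<subseteq> v"
  proof
    assume hs: "h ` u \<subseteq> h ` v"
    show "u \<subseteq> v"
    proof
      fix x assume "x \<in> u"
      hence "h x \<in> h ` v" "x \<in> {1..n'}" using hs u by auto
      thus "x \<in> v" using inj_on_image_mem_iff[OF inj_h _ v] by blast
    qed
  qed (rule image_mono)
  finally show ?thesis .
qed

lemma inj_on_lift: "inj_on lift (Pow {1..n'})"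
proof (rule inj_onI)
  fix u v assume "u \<in> Pow {1..n'}" "v \<in> Pow {1..n'}" "lift u = lift v"
  thus "u = v" using lift_subset_iff[of u v] lift_subset_iff[of v u] by auto
qed

lemma lift_surj:
  assumes "u \<subseteq> {1..n}" "t \<subseteq> u"
  shows "\<exists>v. v \<subseteq> {1..n'} \<and> u = lift v"
proof -
  define v where "v = {y\<in>{1..n'}. h y \<in> u}"
  have "h ` v = u - t"
  proof
    show "h ` v \<subseteq> u - t" unfolding v_def using image_h by blast
    show "u - t \<subseteq> h ` v"
    proof
      fix x assume x: "x \<in> u - t"
      hence "x \<in> h ` {1..n'}" using image_h assms(1) by blast
      thus "x \<in> h ` v" unfolding v_def using x by blast
    qed
  qed
  hence "u = lift v" unfolding lift_def using assms(2) by (simp add: Un_absorb1)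
  moreover have "v \<subseteq> {1..n'}" unfolding v_def by blast
  ultimately show ?thesis by blast
qed

lemma Inter_lift:
  assumes V: "V \<subseteq> Pow {1..n'}" "V \<noteq> {}"
  shows "\<Inter>(lift ` V) = lift (\<Inter>V)"
proof -
  obtain v0 where "v0 \<in> V" using V(2) by blast
  hence "h ` (\<Inter>v\<in>V. v) = (\<Inter>v\<in>V. h ` v)"
    using V(1) by (intro image_INT[OF inj_h]) auto
  moreover have "\<Inter>(lift ` V) = t \<union> (\<Inter>v\<in>V. h ` v)" unfolding lift_def using V(2) by blast
  ultimately show ?thesis unfolding lift_def by simp
qed

lemma rho_lift:
  assumes "V \<subseteq> Pow {1..n'}"
  shows "rho d (lift ` V) = rho d' V"
proof -
  have "rho d (lift ` V) = (\<Sum>v\<in>V. codim d (lift v))"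
    unfolding rho_def using sum.reindex[OF inj_on_subset[OF inj_on_lift assms]] by simp
  also have "\<dots> = rho d' V" unfolding rho_def using codim_lift assms by (intro sum.cong) auto
  finally show ?thesis .
qed

lemma Dd_lift:
  assumes "V \<subseteq> Pow {1..n'}" "V \<noteq> {}"
  shows "Dd d (lift ` V) = Dd d' V"
proof -
  have "\<Inter>V \<subseteq> {1..n'}" using assms by blast
  thus ?thesis unfolding Dd_def Inter_lift[OF assms] rho_lift[OF assms(1)] by (simp add: codim_lift)
qed

lemma card_lift_image: "V \<subseteq> Pow {1..n'} \<Longrightarrow> card (lift ` V) = card V"
  by (rule card_image) (rule inj_on_subset[OF inj_on_lift])

lemma lift_image_Lnd_iff:
  assumes U: "U \<subseteq> Pow {1..n'}"
  shows "lift ` U \<in> Lnd n d \<longleftrightarrow> U \<in> Lnd n' d'"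
proof -
  have "lift X \<subseteq> {1..n} \<and> card (lift X) \<le> d \<longleftrightarrow> X \<subseteq> {1..n'} \<and> card X \<le> d'" if "X \<in> U" for X
    using that U lift_subset[of X] card_lift[of X] card_t by auto
  hence members: "(\<forall>Y\<in>lift ` U. Y \<subseteq> {1..n} \<and> card Y \<le> d) \<longleftrightarrow> (\<forall>X\<in>U. X \<subseteq> {1..n'} \<and> card X \<le> d')"
    by simp
  moreover have "(\<forall>T'\<subseteq>lift ` U. card T' > 1 \<longrightarrow> Dd d T' > 0) \<longleftrightarrow> (\<forall>V\<subseteq>U. card V > 1 \<longrightarrow> Dd d' V > 0)"
  proof
    assume lifted: "\<forall>T'\<subseteq>lift ` U. card T' > 1 \<longrightarrow> Dd d T' > 0"
    show "\<forall>V\<subseteq>U. card V > 1 \<longrightarrow> Dd d' V > 0"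
    proof (intro allI impI)
      fix V assume V: "V \<subseteq> U" "card V > 1"
      hence VP: "V \<subseteq> Pow {1..n'}" "V \<noteq> {}" using U by auto
      have "lift ` V \<subseteq> lift ` U" using V(1) by (rule image_mono)
      moreover have "card (lift ` V) > 1" using card_lift_image[OF VP(1)] V(2) by simp
      ultimately have "Dd d (lift ` V) > 0" using lifted by blast
      thus "Dd d' V > 0" using Dd_lift[OF VP] by simp
    qed
  next
    assume base: "\<forall>V\<subseteq>U. card V > 1 \<longrightarrow> Dd d' V > 0"
    show "\<forall>T'\<subseteq>lift ` U. card T' > 1 \<longrightarrow> Dd d T' > 0"
    proof (intro allI impI)
      fix T' assume T': "T' \<subseteq> lift ` U" "card T' > 1"
      then obtain V where V: "V \<subseteq> U" "T' = lift ` V" by (meson subset_imageE)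
      have VP: "V \<subseteq> Pow {1..n'}" using V(1) U by blast
      have "card V > 1" using T'(2) V(2) card_lift_image[OF VP] by simp
      moreover from this have "V \<noteq> {}" by auto
      ultimately show "Dd d T' > 0" using base V Dd_lift[OF VP] by simp
    qed
  qed
  ultimately show ?thesis unfolding Lnd_iff by (rule arg_cong2[where f = conj])
qed

lemma refines_lift_iff:
  assumes "A \<subseteq> Pow {1..n'}" "B \<subseteq> Pow {1..n'}"
  shows "refines (lift ` A) (lift ` B) \<longleftrightarrow> refines A B"
proof -
  have "refines (lift ` A) (lift ` B) \<longleftrightarrow> (\<forall>a\<in>A. \<exists>b\<in>B. lift b \<subseteq> lift a)"
    unfolding refines_def by simp
  also have "\<dots> \<longleftrightarrow> (\<forall>a\<in>A. \<exists>b\<in>B. b \<subseteq> a)"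
  proof (intro ball_cong bex_cong refl)
    fix a b assume "a \<in> A" "b \<in> B"
    thus "lift b \<subseteq> lift a \<longleftrightarrow> b \<subseteq> a" using assms by (intro lift_subset_iff) auto
  qed
  finally show ?thesis unfolding refines_def .
qed

lemma Lnd_above_t_is_lift_image:
  assumes "U \<in> Lnd n d" "\<forall>u\<in>U. t \<subseteq> u"
  shows "\<exists>U'. U' \<subseteq> Pow {1..n'} \<and> U = lift ` U'"
proof -
  define U' where "U' = {v. v \<subseteq> {1..n'} \<and> lift v \<in> U}"
  have "U \<subseteq> lift ` U'"
  proof
    fix u assume u: "u \<in> U"
    then obtain v where v: "v \<subseteq> {1..n'}" "u = lift v"
      using lift_surj Lnd_subset[OF assms(1) u] assms(2) by blast
    hence "v \<in> U'" unfolding U'_def using u by simp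
    thus "u \<in> lift ` U'" using v(2) by (rule rev_image_eqI)
  qed
  moreover have "lift ` U' \<subseteq> U" "U' \<subseteq> Pow {1..n'}" unfolding U'_def by blast+
  ultimately show ?thesis by blast
qed

lemma hyperplanes_above_t: "{X \<in> hyperplanes n d. t \<subseteq> X} = lift ` hyperplanes n' d'"
proof
  show "lift ` hyperplanes n' d' \<subseteq> {X \<in> hyperplanes n d. t \<subseteq> X}"
    using lift_subset card_lift card_t unfolding lift_def hyperplanes_def by auto
  show "{X \<in> hyperplanes n d. t \<subseteq> X} \<subseteq> lift ` hyperplanes n' d'"
  proof
    fix X assume X: "X \<in> {X \<in> hyperplanes n d. t \<subseteq> X}"
    then obtain v where v: "v \<subseteq> {1..n'}" "X = lift v" using lift_surj unfolding hyperplanes_def by blast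
    hence "card v = d'" using card_lift X unfolding hyperplanes_def by auto
    thus "X \<in> lift ` hyperplanes n' d'" using v unfolding hyperplanes_def by blast
  qed
qed

text \<open>The join of the lifted family lies below {t}, so it is itself a lift, and lifting
  identifies the joins on both sides.\<close>
lemma is_join_lift_iff:
  assumes H': "H' \<subseteq> hyperplanes n' d'"
  shows "is_join n' d' H' {{}} \<longleftrightarrow> is_join n d (lift ` H') {t}"
proof -
  have H'P: "H' \<subseteq> Pow {1..n'}" using H' unfolding hyperplanes_def by blast
  have "finite (lift ` H')" using hyperplane_family_finite[OF H'] by simp
  moreover have "Y \<subseteq> {1..n} \<and> card Y \<le> d" if Y: "Y \<in> lift ` H'" for Y
  proof -
    obtain X where X: "X \<in> H'" "Y = lift X" using Y by blast
    hence "X \<subseteq> {1..n'}" "card X = d'" using H' unfolding hyperplanes_def by auto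
    thus ?thesis using X(2) lift_subset card_lift card_t by simp
  qed
  ultimately obtain J where J: "is_join n d (lift ` H') J" using is_join_exists by metis
  have JL: "J \<in> Lnd n d" using J unfolding is_join_def by simp
  have "{t} \<in> Lnd n d" using singleton_in_Lnd[OF t_subset card_t] .
  moreover have "refines (lift ` H') {t}" unfolding refines_def lift_def by blast
  ultimately have "refines J {t}" using J unfolding is_join_def by blast
  hence "\<forall>j\<in>J. t \<subseteq> j" unfolding refines_def by simp
  then obtain J' where J': "J' \<subseteq> Pow {1..n'}" "J = lift ` J'"
    using Lnd_above_t_is_lift_image[OF JL] by blast
  have J'L: "J' \<in> Lnd n' d'" using lift_image_Lnd_iff[OF J'(1)] JL J'(2) by simp
  have "is_join n' d' H' J'"
    unfolding is_join_def
  proof (intro conjI ballI impI)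
    show "J' \<in> Lnd n' d'" by fact
    show "refines H' J'"
      using J J'(2) refines_lift_iff[OF H'P J'(1)] unfolding is_join_def by simp
    fix K' assume K': "K' \<in> Lnd n' d'" "refines H' K'"
    have K'P: "K' \<subseteq> Pow {1..n'}" using Lnd_subset[OF K'(1)] by blast
    have "lift ` K' \<in> Lnd n d" using lift_image_Lnd_iff[OF K'P] K'(1) by simp
    moreover have "refines (lift ` H') (lift ` K')" using refines_lift_iff[OF H'P K'P] K'(2) by simp
    ultimately have "refines J (lift ` K')" using J unfolding is_join_def by blast
    thus "refines J' K'" using refines_lift_iff[OF J'(1) K'P] J'(2) by simp
  qed
  hence "is_join n' d' H' {{}} \<longleftrightarrow> J' = {{}}" using is_join_unique by metis
  also have "\<dots> \<longleftrightarrow> lift ` J' = lift ` {{}}"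
    using inj_on_image_eq_iff[OF inj_on_lift J'(1), of "{{}}"] by simp
  also have "lift ` {{}} = {t}" unfolding lift_def by simp
  also have "lift ` J' = {t} \<longleftrightarrow> is_join n d (lift ` H') {t}" using is_join_unique J J'(2) by metis
  finally show ?thesis .
qed

lemma card_join_families_above_t:
  "card {H \<in> join_families n d {t}. card H = k} = card {H' \<in> join_families n' d' {{}}. card H' = k}"
proof -
  have "inj_on lift (hyperplanes n' d')"
    using inj_on_lift by (rule inj_on_subset) (auto simp: hyperplanes_def)
  hence "bij_betw lift (hyperplanes n' d') {X \<in> hyperplanes n d. t \<subseteq> X}"
    unfolding bij_betw_def hyperplanes_above_t by simp
  hence "bij_betw ((`) lift) (Pow (hyperplanes n' d')) (Pow {X \<in> hyperplanes n d. t \<subseteq> X})"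
    by (rule bij_betw_Pow)
  moreover have "is_join n d (lift ` H') {t} \<and> card (lift ` H') = k \<longleftrightarrow> is_join n' d' H' {{}} \<and> card H' = k"
    if "H' \<in> Pow (hyperplanes n' d')" for H'
  proof -
    have "H' \<subseteq> Pow {1..n'}" using that unfolding hyperplanes_def by auto
    thus ?thesis using that is_join_lift_iff card_lift_image[of H'] by auto
  qed
  ultimately have bij: "bij_betw ((`) lift) {H' \<in> Pow (hyperplanes n' d'). is_join n' d' H' {{}} \<and> card H' = k}
          {H \<in> Pow {X \<in> hyperplanes n d. t \<subseteq> X}. is_join n d H {t} \<and> card H = k}"
    by (rule bij_betw_Collect)
  have eq: "{H \<in> Pow {X \<in> hyperplanes n d. t \<subseteq> X}. is_join n d H {t} \<and> card H = k}
      = {H \<in> join_families n d {t}. card H = k}"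
    unfolding join_families_def is_join_def refines_def by auto
  have eq': "{H' \<in> Pow (hyperplanes n' d'). is_join n' d' H' {{}} \<and> card H' = k}
      = {H' \<in> join_families n' d' {{}}. card H' = k}"
    unfolding join_families_def by auto
  show ?thesis using bij_betw_same_card[OF bij] unfolding eq eq' by simp
qed

end

lemma card_join_families_singleton:
  assumes t: "t \<subseteq> {1..n}" "card t < d"
  shows "card {H \<in> join_families n d {t}. card H = k} = kappa (n - card t) (d - card t) k {{}}"
proof -
  have "card ({1..n} - t) = n - card t"
    using t(1) by (simp add: card_Diff_subset finite_subset)
  then obtain h where "bij_betw h {1..n - card t} ({1..n} - t)"
    by (metis card_atLeastAtMost diff_Suc_1 finite_Diff finite_atLeastAtMost finite_same_card_bij)
  then interpret link n d t h using t by unfold_locales auto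
  show ?thesis using card_join_families_above_t kappa_eq_card_join_families t(2) by simp
qed

section \<open>Counting\<close>

lemma codim_le_card_join_family:
  assumes H: "H \<in> join_families n d {t}"
  shows "codim d t \<le> int (card H)"
proof -
  have Hh: "H \<subseteq> hyperplanes n d" "is_join n d H {t}" using H unfolding join_families_def by auto
  obtain J where J: "is_join n d H J" "rho d J \<le> rho d H"
    using is_join_exists[OF hyperplane_family_finite[OF Hh(1)] hyperplanesD] Hh(1) by blast
  have "J = {t}" using is_join_unique J(1) Hh(2) by blast
  moreover have "rho d H = int (card H)"
    unfolding rho_def using Hh(1) by (simp add: hyperplanes_def codim_def subset_iff)
  ultimately show ?thesis using J(2) unfolding rho_def by simp
qed

lemma join_families_of_hyperplane:
  assumes t: "t \<subseteq> {1..n}" "card t = d"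
  shows "join_families n d {t} = {{t}}"
proof
  have "{t} \<in> Lnd n d" using singleton_in_Lnd t by simp
  hence "is_join n d {t} {t}" unfolding is_join_def by (simp add: refines_refl)
  thus "{{t}} \<subseteq> join_families n d {t}" using t unfolding join_families_def hyperplanes_def by simp
  show "join_families n d {t} \<subseteq> {{t}}"
  proof
    fix H assume H: "H \<in> join_families n d {t}"
    have "X = t" if "X \<in> H" for X
    proof -
      have X: "t \<subseteq> X" "X \<subseteq> {1..n}" "card X = d"
        using H that unfolding join_families_def is_join_def refines_def hyperplanes_def by auto
      have "finite X" using X(2) by (rule finite_subset) simp
      from card_subset_eq[OF this X(1)] show ?thesis using X(3) t(2) by simp
    qed
    moreover have "H \<noteq> {}" using codim_le_card_join_family[OF H] t(2) unfolding codim_def by auto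
    ultimately show "H \<in> {{t}}" by blast
  qed
qed

lemma card_join_families_singleton_eq_kappa:
  assumes t: "t \<subseteq> {1..n}" "card t \<le> d" and k: "codim d t = 1 \<Longrightarrow> k = 1"
  shows "card {H \<in> join_families n d {t}. card H = k} = kappa (n - card t) (d - card t) k {{}}"
proof (cases "card t < d")
  case True
  thus ?thesis using card_join_families_singleton t(1) by blast
next
  case False
  hence "card t = d" using t(2) by simp
  moreover from this have "k = 1" using k unfolding codim_def by simp
  moreover have "{H \<in> {{t}}. card H = 1} = {{t}}" by auto
  ultimately show ?thesis using join_families_of_hyperplane[OF t(1)] unfolding kappa_def by simp
qed

lemma Mset_finite:
  assumes T: "finite T"
  shows "finite (Mset d m T)"
proof (rule finite_subset)
  show "Mset d m T \<subseteq> {f. \<forall>x. (x \<in> T \<longrightarrow> f x \<in> {0..m}) \<and> (x \<notin> T \<longrightarrow> f x = 0)}"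
  proof
    fix f assume f: "f \<in> Mset d m T"
    have "f x \<le> m" if "x \<in> T" for x
      using member_le_sum[of x T f] that T f unfolding Mset_def by simp
    thus "f \<in> {f. \<forall>x. (x \<in> T \<longrightarrow> f x \<in> {0..m}) \<and> (x \<notin> T \<longrightarrow> f x = 0)}"
      using f unfolding Mset_def by auto
  qed
  show "finite {f. \<forall>x. (x \<in> T \<longrightarrow> f x \<in> {0..m}) \<and> (x \<notin> T \<longrightarrow> f x = 0)}"
    by (rule finite_set_of_finite_funs) (use T in auto)
qed

lemma profile_eq_iff:
  assumes "\<And>x. x \<notin> T \<Longrightarrow> f x = 0"
  shows "(\<lambda>t. if t \<in> T then w (G t) else 0) = f \<longleftrightarrow> (\<forall>t\<in>T. w (G t) = f t)"
  using assms by (auto simp: fun_eq_iff)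

lemma PiE_profile_in_eq_UN:
  assumes M: "\<And>f x. f \<in> M \<Longrightarrow> x \<notin> T \<Longrightarrow> f x = 0"
  shows "{G \<in> \<Pi>\<^sub>E t\<in>T. A t. (\<lambda>t. if t \<in> T then w (G t) else 0) \<in> M}
       = (\<Union>f\<in>M. \<Pi>\<^sub>E t\<in>T. {a \<in> A t. w a = f t})"
proof (intro equalityI subsetI)
  fix G assume G: "G \<in> {G \<in> \<Pi>\<^sub>E t\<in>T. A t. (\<lambda>t. if t \<in> T then w (G t) else 0) \<in> M}"
  hence "G \<in> (\<Pi>\<^sub>E t\<in>T. {a \<in> A t. w a = (if t \<in> T then w (G t) else 0)})" by auto
  thus "G \<in> (\<Union>f\<in>M. \<Pi>\<^sub>E t\<in>T. {a \<in> A t. w a = f t})" using G by blast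
next
  fix G assume "G \<in> (\<Union>f\<in>M. \<Pi>\<^sub>E t\<in>T. {a \<in> A t. w a = f t})"
  then obtain f where f: "f \<in> M" "G \<in> (\<Pi>\<^sub>E t\<in>T. {a \<in> A t. w a = f t})" by blast
  have "(\<lambda>t. if t \<in> T then w (G t) else 0) = f"
    using profile_eq_iff[of T f w G] M[OF f(1)] f(2) by auto
  thus "G \<in> {G \<in> \<Pi>\<^sub>E t\<in>T. A t. (\<lambda>t. if t \<in> T then w (G t) else 0) \<in> M}" using f by auto
qed

lemma card_PiE_by_profile:
  fixes w :: "'b \<Rightarrow> nat"
  assumes T: "finite T" and A: "\<And>t. t \<in> T \<Longrightarrow> finite (A t)"
    and M: "finite M" "\<And>f x. f \<in> M \<Longrightarrow> x \<notin> T \<Longrightarrow> f x = 0"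
  shows "card {G \<in> \<Pi>\<^sub>E t\<in>T. A t. (\<lambda>t. if t \<in> T then w (G t) else 0) \<in> M}
           = (\<Sum>f\<in>M. \<Prod>t\<in>T. card {a \<in> A t. w a = f t})"
proof -
  have "card (\<Union>f\<in>M. \<Pi>\<^sub>E t\<in>T. {a \<in> A t. w a = f t})
      = (\<Sum>f\<in>M. card (\<Pi>\<^sub>E t\<in>T. {a \<in> A t. w a = f t}))"
  proof (rule card_UN_disjoint[OF M(1)])
    show "\<forall>f\<in>M. finite (\<Pi>\<^sub>E t\<in>T. {a \<in> A t. w a = f t})" using T A by (simp add: finite_PiE)
    show "\<forall>f\<in>M. \<forall>g\<in>M. f \<noteq> g \<longrightarrow> (\<Pi>\<^sub>E t\<in>T. {a \<in> A t. w a = f t}) \<inter> (\<Pi>\<^sub>E t\<in>T. {a \<in> A t. w a = g t}) = {}"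
    proof (intro ballI impI equals0I)
      fix f g G assume fg: "f \<in> M" "g \<in> M" "f \<noteq> g"
        and "G \<in> (\<Pi>\<^sub>E t\<in>T. {a \<in> A t. w a = f t}) \<inter> (\<Pi>\<^sub>E t\<in>T. {a \<in> A t. w a = g t})"
      hence "(\<lambda>t. if t \<in> T then w (G t) else 0) = f" "(\<lambda>t. if t \<in> T then w (G t) else 0) = g"
        using profile_eq_iff[of T f w G] profile_eq_iff[of T g w G] M(2)[OF fg(1)] M(2)[OF fg(2)]
        by auto
      thus False using fg(3) by simp
    qed
  qed
  thus ?thesis using PiE_profile_in_eq_UN[of M T A w] M(2) T by (simp add: card_PiE)
qed

lemma profile_in_Mset_iff:
  assumes T: "T \<in> Lnd n d" and G: "G \<in> (\<Pi>\<^sub>E t\<in>T. join_families n d {t})"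
  shows "(\<lambda>t. if t \<in> T then card (G t) else 0) \<in> Mset d m T \<longleftrightarrow> (\<Sum>t\<in>T. card (G t)) = m"
proof -
  have "card (G t) > 0 \<and> int (card (G t)) \<ge> codim d t \<and> (codim d t = 1 \<longrightarrow> card (G t) = 1)"
    if t: "t \<in> T" for t
  proof -
    have GT: "G t \<in> join_families n d {t}" using G t by blast
    have "codim d t \<ge> 1" using codim_ge_1[OF Lnd_card_le[OF T t]] .
    moreover have "card (G t) = 1" if "codim d t = 1"
      using GT join_families_of_hyperplane[OF Lnd_subset[OF T t]] that unfolding codim_def by auto
    ultimately show ?thesis using codim_le_card_join_family[OF GT] by auto
  qed
  thus ?thesis unfolding Mset_def by auto
qed

theorem proposition4p8:
  fixes n d m :: nat and T :: "nat set set"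
  assumes "d < n" and "T \<in> Lnd n d" and "T \<noteq> {{}}" and "0 < m"
  shows "kappa n d m T =
    (\<Sum>f\<in>Mset d m T. \<Prod>X\<in>T. kappa (n - card X) (d - card X) (f X) {{}})"
proof -
  note T = assms(2)
  let ?JF = "\<lambda>t. join_families n d {t}"
  have "kappa n d m T = card {H \<in> join_families n d T. card H = m}"
    using kappa_eq_card_join_families assms(3) by blast
  also have "\<dots> = card {G \<in> \<Pi>\<^sub>E t\<in>T. ?JF t. (\<Sum>t\<in>T. card (G t)) = m}"
    by (rule card_join_families_eq_card_PiE[OF T])
  also have "\<dots> = card {G \<in> \<Pi>\<^sub>E t\<in>T. ?JF t. (\<lambda>t. if t \<in> T then card (G t) else 0) \<in> Mset d m T}"
    using profile_in_Mset_iff[OF T] by (intro arg_cong[where f = card]) blast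
  also have "\<dots> = (\<Sum>f\<in>Mset d m T. \<Prod>t\<in>T. card {H \<in> ?JF t. card H = f t})"
    using Lnd_finite[OF T] finite_hyperplanes Mset_finite[OF Lnd_finite[OF T]]
    by (intro card_PiE_by_profile) (auto simp: join_families_def Mset_def intro: finite_subset)
  also have "\<dots> = (\<Sum>f\<in>Mset d m T. \<Prod>X\<in>T. kappa (n - card X) (d - card X) (f X) {{}})"
    using Lnd_subset[OF T] Lnd_card_le[OF T]
    by (intro sum.cong prod.cong refl card_join_families_singleton_eq_kappa) (auto simp: Mset_def)
  finally show ?thesis .
qed

end
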